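(* Let $W\in\mathbb{S}^n_+$, $K\in\mathbb{R}^{m\times n}$, $R_1\in\mathbb{S}^{n_1}_+,\dots,R_q\in\mathbb{S}^{n_q}_+$, $S\in\mathbb{D}^m_+$, $\sigma_1,\dots,\sigma_q>0$, and $Z,J\in\mathbb{R}^{m\times n}$. Let $R(\tau):=\bigoplus_{j=1}^q e^{\sigma_j\tau_j}R_j$ for $\tau\in\mathbb{R}^q$, $\Sigma:=\bigoplus_{j=1}^q\sigma_j\mathbf{I}_{n_j}$, and $\widehat R:=\bigoplus_{i=1}^q R_i$. Then $$\begin{bmatrix}\operatorname{He}((A+BK)W) & -BK & BS-WK^{\mathsf T}-Z^{\mathsf T}\\ \star & \operatorname{He}(R(\tau)A)-\Sigma R(\tau) & K^{\mathsf T}-J^{\mathsf T}\\ \star&\star&-2S\end{bmatrix}\prec 0\quad\text{for all }\tau\in\mathcal{T}$$ holds if and only if, for all $\Psi\in\mathcal{Z}:=\left\{\bigoplus_{i=1}^q\psi_i\mathbf{I}_{n_i}:\ \psi_i\in\{1,e^{\sigma_iT_2^{(i)}}\}\right\}$, $$\mathfrak{N}(\Psi):=\begin{bmatrix}\operatorname{He}((A+BK)W) & -BK & BS-WK^{\mathsf T}-Z^{\mathsf T}\\ \star & \operatorname{He}(\widehat R\Psi A)-\Sigma\widehat R\Psi & K^{\mathsf T}-J^{\mathsf T}\\ \star&\star&-2S\end{bmatrix}\prec 0.$$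
   Context: Fix integers $n,m\ge1$, $1\le q\le n$, $n_1,\dots,n_q\ge1$ with $n_1+\dots+n_q=n$; $A\in\mathbb{R}^{n\times n}$, $B\in\mathbb{R}^{n\times m}$; positive reals $T_2^{(1)},\dots,T_2^{(q)}$, and $\mathcal{T}=[0,T_2^{(1)}]\times\dots\times[0,T_2^{(q)}]$. Notation: $\mathbb{S}^k_+$ symmetric positive definite $k\times k$ matrices; $\mathbb{D}^m_+$ diagonal positive definite $m\times m$ matrices; $\operatorname{He}(M)=M+M^{\mathsf T}$; $\bigoplus$ block-diagonal direct sum; $\star$ symmetric blocks. *)

theory Defs
  imports "Jordan_Normal_Form.Matrix"
begin

definition blk_off :: "(nat \<Rightarrow> nat) \<Rightarrow> nat \<Rightarrow> nat" where
  "blk_off ns j = (\<Sum>i<j. ns i)"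

definition blockdiag :: "nat \<Rightarrow> (nat \<Rightarrow> nat) \<Rightarrow> (nat \<Rightarrow> real mat) \<Rightarrow> real mat" where
  "blockdiag q ns F = mat (blk_off ns q) (blk_off ns q) (\<lambda>(i,k).
     \<Sum>j<q. if blk_off ns j \<le> i \<and> i < blk_off ns (Suc j) \<and> blk_off ns j \<le> k \<and> k < blk_off ns (Suc j)
            then F j $$ (i - blk_off ns j, k - blk_off ns j) else 0)"

definition He :: "real mat \<Rightarrow> real mat" where
  "He M = M + transpose_mat M"

(* Symmetric 3x3 block matrix [M11 M12 M13; * M22 M23; * * M33], block sizes a, b, c;
   the starred blocks are the transposes of the corresponding upper blocks *)
definition sym_block3 :: "nat \<Rightarrow> nat \<Rightarrow> nat \<Rightarrow> real mat \<Rightarrow> real mat \<Rightarrow> real mat \<Rightarrow> real mat \<Rightarrow> real mat \<Rightarrow> real mat \<Rightarrow> real mat" where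
  "sym_block3 a b c M11 M12 M13 M22 M23 M33 = mat (a+b+c) (a+b+c) (\<lambda>(i,j).
     if i < a then
       (if j < a then M11 $$ (i,j) else if j < a+b then M12 $$ (i, j-a) else M13 $$ (i, j-a-b))
     else if i < a+b then
       (if j < a then M12 $$ (j, i-a) else if j < a+b then M22 $$ (i-a, j-a) else M23 $$ (i-a, j-a-b))
     else
       (if j < a then M13 $$ (j, i-a-b) else if j < a+b then M23 $$ (j-a, i-a-b) else M33 $$ (i-a-b, j-a-b)))"

definition neg_def :: "real mat \<Rightarrow> bool" where
  "neg_def M \<longleftrightarrow> M \<in> carrier_mat (dim_row M) (dim_row M) \<and> transpose_mat M = M \<and>
     (\<forall>x \<in> carrier_vec (dim_row M). x \<noteq> 0\<^sub>v (dim_row M) \<longrightarrow> x \<bullet> (M *\<^sub>v x) < 0)"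

definition pos_def :: "nat \<Rightarrow> real mat \<Rightarrow> bool" where
  "pos_def k M \<longleftrightarrow> M \<in> carrier_mat k k \<and> transpose_mat M = M \<and>
     (\<forall>x \<in> carrier_vec k. x \<noteq> 0\<^sub>v k \<longrightarrow> x \<bullet> (M *\<^sub>v x) > 0)"

definition diag_pos :: "nat \<Rightarrow> real mat \<Rightarrow> bool" where
  "diag_pos k M \<longleftrightarrow> M \<in> carrier_mat k k \<and>
     (\<forall>i<k. \<forall>j<k. i \<noteq> j \<longrightarrow> M $$ (i,j) = 0) \<and> (\<forall>i<k. M $$ (i,i) > 0)"

end

theory Submission
  imports Defs
begin

(* Both sides concern the one matrix function Phi(psi) = N(diag(psi_1 I, ..., psi_q I)),
   which is affine in psi; the left side is its restriction to psi_j = exp(sigma_j tau_j),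
   since R(tau) = Rhat Psi.  As tau ranges over the box T, psi ranges over the box
   prod_j [1, exp(sigma_j T_j)].  Negative definiteness is preserved under convex
   combinations, so, splitting one coordinate at a time, it holds on the whole box as soon
   as it holds at the vertices. *)

abbreviation in_block :: "(nat \<Rightarrow> nat) \<Rightarrow> nat \<Rightarrow> nat \<Rightarrow> bool" where
  "in_block ns j k \<equiv> blk_off ns j \<le> k \<and> k < blk_off ns (Suc j)"

lemma blk_off_Suc: "blk_off ns (Suc j) = blk_off ns j + ns j"
  by (simp add: blk_off_def)

lemma blk_off_mono: "j \<le> j' \<Longrightarrow> blk_off ns j \<le> blk_off ns j'"
  unfolding blk_off_def by (rule sum_mono2) auto

lemma in_block_offset_less: "in_block ns j k \<Longrightarrow> k - blk_off ns j < ns j"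
  by (simp add: blk_off_Suc less_diff_conv2)

lemma in_block_unique: "in_block ns j k \<Longrightarrow> in_block ns j' k \<Longrightarrow> j = j'"
  by (metis Suc_leI blk_off_mono leD linorder_neqE_nat order.strict_trans2)

lemma in_block_exists: "k < blk_off ns q \<Longrightarrow> \<exists>j<q. in_block ns j k"
proof (induction q)
  case (Suc q)
  show ?case
  proof (cases "k < blk_off ns q")
    case True
    then show ?thesis using Suc.IH less_SucI by blast
  next
    case False
    then show ?thesis using Suc.prems by auto
  qed
qed (simp add: blk_off_def)

lemma blockdiag_carrier: "blockdiag q ns F \<in> carrier_mat (blk_off ns q) (blk_off ns q)"
  by (simp add: blockdiag_def)

lemma blockdiag_entry:
  assumes "j < q" "in_block ns j k" "i < blk_off ns q" "k < blk_off ns q"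
  shows "blockdiag q ns F $$ (i, k)
       = (if in_block ns j i then F j $$ (i - blk_off ns j, k - blk_off ns j) else 0)"
proof -
  have "blockdiag q ns F $$ (i, k) = (\<Sum>j'<q. if in_block ns j' i \<and> in_block ns j' k
      then F j' $$ (i - blk_off ns j', k - blk_off ns j') else 0)"
    using assms(3,4) by (simp add: blockdiag_def conj_assoc)
  also have "\<dots> = (\<Sum>j'<q. if j' = j then
      (if in_block ns j i then F j $$ (i - blk_off ns j, k - blk_off ns j) else 0) else 0)"
  proof (intro sum.cong refl)
    fix j' assume "j' \<in> {..<q}"
    show "(if in_block ns j' i \<and> in_block ns j' k
        then F j' $$ (i - blk_off ns j', k - blk_off ns j') else 0)
      = (if j' = j then
        (if in_block ns j i then F j $$ (i - blk_off ns j, k - blk_off ns j) else 0) else 0)"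
    proof (cases "j' = j")
      case False
      then have "\<not> in_block ns j' k" using in_block_unique assms(2) by blast
      with False show ?thesis by auto
    qed (use assms(2) in simp)
  qed
  finally show ?thesis
    using assms(1) by simp
qed

lemma blockdiag_cong: "(\<And>j. j < q \<Longrightarrow> F j = G j) \<Longrightarrow> blockdiag q ns F = blockdiag q ns G"
  unfolding blockdiag_def by (intro arg_cong[where f = "mat _ _"] ext) (auto intro!: sum.cong)

lemma blockdiag_lincomb:
  assumes "\<And>j. j < q \<Longrightarrow> F j \<in> carrier_mat (ns j) (ns j)"
    and "\<And>j. j < q \<Longrightarrow> G j \<in> carrier_mat (ns j) (ns j)"
  shows "blockdiag q ns (\<lambda>j. a \<cdot>\<^sub>m F j + b \<cdot>\<^sub>m G j) = a \<cdot>\<^sub>m blockdiag q ns F + b \<cdot>\<^sub>m blockdiag q ns G"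
    (is "?lhs = ?rhs")
proof (rule eq_matI)
  fix i k assume "i < dim_row ?rhs" "k < dim_col ?rhs"
  then have ik: "i < blk_off ns q" "k < blk_off ns q" by (simp_all add: blockdiag_def)
  then obtain j where j: "j < q" "in_block ns j k" using in_block_exists by blast
  show "?lhs $$ (i, k) = ?rhs $$ (i, k)"
    using ik assms[OF j(1)] in_block_offset_less[OF j(2)] in_block_offset_less[of ns j i]
    by (simp add: blockdiag_entry[OF j ik] blockdiag_carrier[THEN carrier_matD(1)]
        blockdiag_carrier[THEN carrier_matD(2)])
qed (simp_all add: blockdiag_def)

lemma blockdiag_scalar_lincomb:
  "blockdiag q ns (\<lambda>j. (a * c j + b * d j) \<cdot>\<^sub>m 1\<^sub>m (ns j))
     = a \<cdot>\<^sub>m blockdiag q ns (\<lambda>j. c j \<cdot>\<^sub>m 1\<^sub>m (ns j)) + b \<cdot>\<^sub>m blockdiag q ns (\<lambda>j. d j \<cdot>\<^sub>m 1\<^sub>m (ns j))"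
proof -
  have "blockdiag q ns (\<lambda>j. (a * c j + b * d j) \<cdot>\<^sub>m 1\<^sub>m (ns j))
      = blockdiag q ns (\<lambda>j. a \<cdot>\<^sub>m (c j \<cdot>\<^sub>m 1\<^sub>m (ns j)) + b \<cdot>\<^sub>m (d j \<cdot>\<^sub>m 1\<^sub>m (ns j)))"
    by (intro blockdiag_cong eq_matI) (auto simp: algebra_simps)
  then show ?thesis
    by (simp add: blockdiag_lincomb)
qed

lemma blockdiag_scalar_entry:
  assumes "i < blk_off ns q" "k < blk_off ns q" "j < q" "in_block ns j k"
  shows "blockdiag q ns (\<lambda>j. c j \<cdot>\<^sub>m 1\<^sub>m (ns j)) $$ (i, k) = (if i = k then c j else 0)"
  using assms in_block_offset_less[of ns j] by (auto simp: blockdiag_entry[OF assms(3,4,1,2)])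

lemma blockdiag_smult_blocks:
  assumes "\<And>j. j < q \<Longrightarrow> F j \<in> carrier_mat (ns j) (ns j)"
  shows "blockdiag q ns (\<lambda>j. c j \<cdot>\<^sub>m F j) = blockdiag q ns F * blockdiag q ns (\<lambda>j. c j \<cdot>\<^sub>m 1\<^sub>m (ns j))"
    (is "?lhs = ?F * ?D")
proof (rule eq_matI)
  fix i k assume "i < dim_row (?F * ?D)" "k < dim_col (?F * ?D)"
  then have ik: "i < blk_off ns q" "k < blk_off ns q" by (simp_all add: blockdiag_def)
  then obtain j where j: "j < q" "in_block ns j k" using in_block_exists by blast
  have "(?F * ?D) $$ (i, k) = (\<Sum>l<blk_off ns q. ?F $$ (i, l) * ?D $$ (l, k))"
    using ik by (simp add: blockdiag_def scalar_prod_def lessThan_atLeast0)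
  also have "\<dots> = ?F $$ (i, k) * c j"
    using ik j by (simp add: blockdiag_scalar_entry if_distrib[of "\<lambda>x. _ * x"] cong: if_cong)
  also have "\<dots> = ?lhs $$ (i, k)"
    using ik assms[OF j(1)] in_block_offset_less[OF j(2)] in_block_offset_less[of ns j i]
    by (simp add: blockdiag_entry[OF j ik])
  finally show "?lhs $$ (i, k) = (?F * ?D) $$ (i, k)" ..
qed (simp_all add: blockdiag_def)

lemma He_mult_diff_lincomb:
  assumes P: "P \<in> carrier_mat n n" and Q: "Q \<in> carrier_mat n n" and A: "A \<in> carrier_mat n n"
    and X: "X \<in> carrier_mat n n" and Y: "Y \<in> carrier_mat n n"
  shows "He (P * (a \<cdot>\<^sub>m X + b \<cdot>\<^sub>m Y) * A) - Q * (a \<cdot>\<^sub>m X + b \<cdot>\<^sub>m Y)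
       = a \<cdot>\<^sub>m (He (P * X * A) - Q * X) + b \<cdot>\<^sub>m (He (P * Y * A) - Q * Y)"
proof -
  have left: "M * (a \<cdot>\<^sub>m X + b \<cdot>\<^sub>m Y) = a \<cdot>\<^sub>m (M * X) + b \<cdot>\<^sub>m (M * Y)"
    if "M \<in> carrier_mat n n" for M
    using that X Y by (simp add: mult_add_distrib_mat[OF that smult_carrier_mat smult_carrier_mat]
        mult_smult_distrib[of _ n n])
  have "P * (a \<cdot>\<^sub>m X + b \<cdot>\<^sub>m Y) * A = a \<cdot>\<^sub>m (P * X * A) + b \<cdot>\<^sub>m (P * Y * A)"
    using P A X Y
    by (simp add: left[OF P] mult_smult_assoc_mat[of _ n n] add_mult_distrib_mat[OF
          smult_carrier_mat[OF mult_carrier_mat[OF P X]] smult_carrier_mat[OF mult_carrier_mat[OF P Y]] A])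
  with left[OF Q] show ?thesis
    using P Q A X Y unfolding He_def by (intro eq_matI) (auto simp: algebra_simps)
qed

lemma sym_block3_affine_middle:
  assumes "X \<in> carrier_mat b b" "Y \<in> carrier_mat b b" and "\<alpha> + \<beta> = 1"
  shows "sym_block3 a b c M11 M12 M13 (\<alpha> \<cdot>\<^sub>m X + \<beta> \<cdot>\<^sub>m Y) M23 M33
       = \<alpha> \<cdot>\<^sub>m sym_block3 a b c M11 M12 M13 X M23 M33 + \<beta> \<cdot>\<^sub>m sym_block3 a b c M11 M12 M13 Y M23 M33"
    (is "?lhs = ?rhs")
proof (rule eq_matI)
  fix i j assume "i < dim_row ?rhs" "j < dim_col ?rhs"
  then have "i < a + b + c" "j < a + b + c" by (simp_all add: sym_block3_def)
  moreover have "\<alpha> * v + \<beta> * v = v" for v :: real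
    using \<open>\<alpha> + \<beta> = 1\<close> by (metis distrib_right mult_1)
  ultimately show "?lhs $$ (i, j) = ?rhs $$ (i, j)"
    using assms(1,2) by (simp add: sym_block3_def)
qed (simp_all add: sym_block3_def)

lemma quadform_lincomb:
  fixes P Q :: "real mat"
  assumes "P \<in> carrier_mat d d" "Q \<in> carrier_mat d d" "x \<in> carrier_vec d"
  shows "x \<bullet> ((a \<cdot>\<^sub>m P + b \<cdot>\<^sub>m Q) *\<^sub>v x) = a * (x \<bullet> (P *\<^sub>v x)) + b * (x \<bullet> (Q *\<^sub>v x))"
proof -
  have "(a \<cdot>\<^sub>m P + b \<cdot>\<^sub>m Q) *\<^sub>v x = a \<cdot>\<^sub>v (P *\<^sub>v x) + b \<cdot>\<^sub>v (Q *\<^sub>v x)"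
    using assms by (intro eq_vecI) (auto simp: algebra_simps scalar_prod_def sum_distrib_left sum.distrib)
  then show ?thesis using assms by (simp add: scalar_prod_add_distrib[of _ d])
qed

lemma neg_def_convex_comb:
  assumes P: "neg_def P" "P \<in> carrier_mat d d" and Q: "neg_def Q" "Q \<in> carrier_mat d d"
    and t: "0 \<le> t" "t \<le> 1"
  shows "neg_def ((1 - t) \<cdot>\<^sub>m P + t \<cdot>\<^sub>m Q)"
proof -
  let ?M = "(1 - t) \<cdot>\<^sub>m P + t \<cdot>\<^sub>m Q"
  have "transpose_mat ?M = ?M"
  proof (rule eq_matI)
    fix i j assume "i < dim_row ?M" "j < dim_col ?M"
    moreover have "transpose_mat P $$ (i, j) = P $$ (i, j)" "transpose_mat Q $$ (i, j) = Q $$ (i, j)"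
      using P Q by (simp_all add: neg_def_def)
    ultimately show "transpose_mat ?M $$ (i, j) = ?M $$ (i, j)" using P Q by simp
  qed (use P Q in auto)
  moreover have "x \<bullet> (?M *\<^sub>v x) < 0" if "x \<in> carrier_vec d" "x \<noteq> 0\<^sub>v d" for x
  proof -
    have "x \<bullet> (P *\<^sub>v x) < 0" "x \<bullet> (Q *\<^sub>v x) < 0"
      using P Q that by (auto simp: neg_def_def)
    with t show ?thesis
      unfolding quadform_lincomb[OF P(2) Q(2) that(1)] by (simp add: convex_bound_lt)
  qed
  ultimately show ?thesis using P Q by (simp add: neg_def_def)
qed

lemma real_between_convex_comb:
  fixes a b x :: real
  assumes "a \<le> x" "x \<le> b"
  obtains t where "0 \<le> t" "t \<le> 1" "x = (1 - t) * a + t * b"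
proof (cases "a = b")
  case True
  with assms show ?thesis by (intro that[of 0]) auto
next
  case False
  with assms have "a < b" by simp
  define t where "t = (x - a) / (b - a)"
  have "(1 - t) * a + t * b = a + t * (b - a)" by (simp add: algebra_simps)
  also have "\<dots> = x" using \<open>a < b\<close> by (simp add: t_def)
  finally show ?thesis
    using assms \<open>a < b\<close> by (intro that[of t]) (auto simp: t_def)
qed

lemma neg_def_on_box_if_vertices:
  fixes \<Phi> :: "(nat \<Rightarrow> real) \<Rightarrow> real mat"
  assumes carrier: "\<And>\<psi>. \<Phi> \<psi> \<in> carrier_mat d d"
    and affine: "\<And>\<psi> \<psi>' t. 0 \<le> t \<Longrightarrow> t \<le> 1 \<Longrightarrow>
      \<Phi> (\<lambda>j. (1 - t) * \<psi> j + t * \<psi>' j) = (1 - t) \<cdot>\<^sub>m \<Phi> \<psi> + t \<cdot>\<^sub>m \<Phi> \<psi>'"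
    and vertices: "\<And>\<psi>. \<forall>j<q. \<psi> j \<in> {a j, b j} \<Longrightarrow> neg_def (\<Phi> \<psi>)"
    and box: "\<forall>j<q. a j \<le> \<psi> j \<and> \<psi> j \<le> b j"
  shows "neg_def (\<Phi> \<psi>)"
proof -
  have "neg_def (\<Phi> \<psi>)"
    if "k \<le> q" "\<forall>j<k. a j \<le> \<psi> j \<and> \<psi> j \<le> b j" "\<forall>j\<in>{k..<q}. \<psi> j \<in> {a j, b j}" for k \<psi>
    using that
  proof (induction k arbitrary: \<psi>)
    case 0
    then show ?case by (intro vertices) auto
  next
    case (Suc k)
    then obtain t where t: "0 \<le> t" "t \<le> 1" "\<psi> k = (1 - t) * a k + t * b k"
      by (meson lessI real_between_convex_comb)
    have vertex_k: "neg_def (\<Phi> (\<psi>(k := v)))" if "v \<in> {a k, b k}" for v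
    proof (rule Suc.IH)
      show "k \<le> q" "\<forall>j<k. a j \<le> (\<psi>(k := v)) j \<and> (\<psi>(k := v)) j \<le> b j"
        using Suc.prems(1,2) by auto
      show "\<forall>j\<in>{k..<q}. (\<psi>(k := v)) j \<in> {a j, b j}"
        using Suc.prems(3) that by auto
    qed
    have "(\<lambda>j. (1 - t) * (\<psi>(k := a k)) j + t * (\<psi>(k := b k)) j) = \<psi>"
      using t(3) by (auto simp: algebra_simps)
    then have "\<Phi> \<psi> = (1 - t) \<cdot>\<^sub>m \<Phi> (\<psi>(k := a k)) + t \<cdot>\<^sub>m \<Phi> (\<psi>(k := b k))"
      using affine[OF t(1,2), of "\<psi>(k := a k)" "\<psi>(k := b k)"] by (simp only:)
    also have "neg_def \<dots>"
      using vertex_k carrier t(1,2) by (intro neg_def_convex_comb) auto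
    finally show ?case .
  qed
  from this[of q] box show ?thesis by simp
qed

lemma neg_def_exp_box_iff_vertices:
  fixes \<Phi> :: "(nat \<Rightarrow> real) \<Rightarrow> real mat"
  assumes carrier: "\<And>\<psi>. \<Phi> \<psi> \<in> carrier_mat d d"
    and affine: "\<And>\<psi> \<psi>' t. 0 \<le> t \<Longrightarrow> t \<le> 1 \<Longrightarrow>
      \<Phi> (\<lambda>j. (1 - t) * \<psi> j + t * \<psi>' j) = (1 - t) \<cdot>\<^sub>m \<Phi> \<psi> + t \<cdot>\<^sub>m \<Phi> \<psi>'"
    and cong: "\<And>\<psi> \<psi>'. \<forall>j<q. \<psi> j = \<psi>' j \<Longrightarrow> \<Phi> \<psi> = \<Phi> \<psi>'"
    and \<sigma>: "\<forall>j<q. 0 \<le> \<sigma> j" and T: "\<forall>j<q. 0 \<le> T j"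
  shows "(\<forall>\<tau>. (\<forall>j<q. 0 \<le> \<tau> j \<and> \<tau> j \<le> T j) \<longrightarrow> neg_def (\<Phi> (\<lambda>j. exp (\<sigma> j * \<tau> j))))
     \<longleftrightarrow> (\<forall>\<psi>. (\<forall>j<q. \<psi> j \<in> {1, exp (\<sigma> j * T j)}) \<longrightarrow> neg_def (\<Phi> \<psi>))"
  (is "?box \<longleftrightarrow> ?vertices")
proof
  assume box: ?box
  show ?vertices
  proof (intro allI impI)
    fix \<psi> assume \<psi>: "\<forall>j<q. \<psi> j \<in> {1, exp (\<sigma> j * T j)}"
    define \<tau> where "\<tau> j = (if \<psi> j = 1 then 0 else T j)" for j
    have "\<forall>j<q. 0 \<le> \<tau> j \<and> \<tau> j \<le> T j"
      using T by (simp add: \<tau>_def)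
    with box have "neg_def (\<Phi> (\<lambda>j. exp (\<sigma> j * \<tau> j)))"
      by blast
    moreover have "\<Phi> (\<lambda>j. exp (\<sigma> j * \<tau> j)) = \<Phi> \<psi>"
      using \<psi> by (intro cong) (auto simp: \<tau>_def)
    ultimately show "neg_def (\<Phi> \<psi>)" by simp
  qed
next
  assume vertices: ?vertices
  show ?box
  proof (intro allI impI)
    fix \<tau> assume \<tau>: "\<forall>j<q. 0 \<le> \<tau> j \<and> \<tau> j \<le> T j"
    show "neg_def (\<Phi> (\<lambda>j. exp (\<sigma> j * \<tau> j)))"
    proof (rule neg_def_on_box_if_vertices[OF carrier affine])
      show "neg_def (\<Phi> \<psi>)" if "\<forall>j<q. \<psi> j \<in> {1, exp (\<sigma> j * T j)}" for \<psi>
        using vertices that by blast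
      show "\<forall>j<q. 1 \<le> exp (\<sigma> j * \<tau> j) \<and> exp (\<sigma> j * \<tau> j) \<le> exp (\<sigma> j * T j)"
        using \<sigma> \<tau> by (simp add: mult_left_mono)
    qed
  qed
qed

theorem proposition1:
  fixes n m q :: nat and ns :: "nat \<Rightarrow> nat"
    and A B W K Z J S :: "real mat" and R :: "nat \<Rightarrow> real mat"
    and \<sigma> T2 :: "nat \<Rightarrow> real"
  assumes "n \<ge> 1" "m \<ge> 1" "1 \<le> q" "q \<le> n"
    and "\<forall>j<q. ns j \<ge> 1" "(\<Sum>j<q. ns j) = n"
    and "A \<in> carrier_mat n n" "B \<in> carrier_mat n m"
    and "\<forall>j<q. T2 j > 0"
    and "pos_def n W" "K \<in> carrier_mat m n"
    and "\<forall>j<q. pos_def (ns j) (R j)" "diag_pos m S"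
    and "\<forall>j<q. \<sigma> j > 0"
    and "Z \<in> carrier_mat m n" "J \<in> carrier_mat m n"
  shows "(\<forall>\<tau> :: nat \<Rightarrow> real. (\<forall>j<q. 0 \<le> \<tau> j \<and> \<tau> j \<le> T2 j) \<longrightarrow>
           (let R\<tau> = blockdiag q ns (\<lambda>j. exp (\<sigma> j * \<tau> j) \<cdot>\<^sub>m R j);
                \<Sigma> = blockdiag q ns (\<lambda>j. \<sigma> j \<cdot>\<^sub>m 1\<^sub>m (ns j))
            in neg_def (sym_block3 n n m
                 (He ((A + B * K) * W)) (- (B * K)) (B * S - W * transpose_mat K - transpose_mat Z)
                 (He (R\<tau> * A) - \<Sigma> * R\<tau>) (transpose_mat K - transpose_mat J)
                 (- (2 \<cdot>\<^sub>m S)))))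
         \<longleftrightarrow>
         (\<forall>\<psi> :: nat \<Rightarrow> real. (\<forall>j<q. \<psi> j \<in> {1, exp (\<sigma> j * T2 j)}) \<longrightarrow>
           (let \<Psi> = blockdiag q ns (\<lambda>j. \<psi> j \<cdot>\<^sub>m 1\<^sub>m (ns j));
                Rhat = blockdiag q ns R;
                \<Sigma> = blockdiag q ns (\<lambda>j. \<sigma> j \<cdot>\<^sub>m 1\<^sub>m (ns j))
            in neg_def (sym_block3 n n m
                 (He ((A + B * K) * W)) (- (B * K)) (B * S - W * transpose_mat K - transpose_mat Z)
                 (He (Rhat * \<Psi> * A) - \<Sigma> * Rhat * \<Psi>) (transpose_mat K - transpose_mat J)
                 (- (2 \<cdot>\<^sub>m S)))))"
proof -
  let ?Rh = "blockdiag q ns R"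
  let ?\<Sigma> = "blockdiag q ns (\<lambda>j. \<sigma> j \<cdot>\<^sub>m 1\<^sub>m (ns j))"
  let ?\<Psi> = "\<lambda>\<psi>. blockdiag q ns (\<lambda>j. \<psi> j \<cdot>\<^sub>m 1\<^sub>m (ns j))"
  let ?\<Phi> = "\<lambda>\<psi>. sym_block3 n n m
                 (He ((A + B * K) * W)) (- (B * K)) (B * S - W * transpose_mat K - transpose_mat Z)
                 (He (?Rh * ?\<Psi> \<psi> * A) - ?\<Sigma> * ?Rh * ?\<Psi> \<psi>) (transpose_mat K - transpose_mat J) (- (2 \<cdot>\<^sub>m S))"
  have size: "blk_off ns q = n"
    using assms(6) by (simp add: blk_off_def)
  have R: "\<And>j. j < q \<Longrightarrow> R j \<in> carrier_mat (ns j) (ns j)"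
    using assms(12) by (simp add: pos_def_def)
  have Rh: "?Rh \<in> carrier_mat n n" and \<Sigma>: "?\<Sigma> \<in> carrier_mat n n" and \<Psi>: "\<And>\<psi>. ?\<Psi> \<psi> \<in> carrier_mat n n"
    using blockdiag_carrier size by metis+
  have R\<tau>: "blockdiag q ns (\<lambda>j. exp (\<sigma> j * \<tau> j) \<cdot>\<^sub>m R j) = ?Rh * ?\<Psi> (\<lambda>j. exp (\<sigma> j * \<tau> j))"
    for \<tau> :: "nat \<Rightarrow> real"
    using R by (rule blockdiag_smult_blocks)
  have \<Sigma>_assoc: "?\<Sigma> * (?Rh * X) = ?\<Sigma> * ?Rh * X" if "X \<in> carrier_mat n n" for X
    using \<Sigma> Rh that by simp
  have \<Phi>_affine: "?\<Phi> (\<lambda>j. (1 - t) * \<psi> j + t * \<psi>' j) = (1 - t) \<cdot>\<^sub>m ?\<Phi> \<psi> + t \<cdot>\<^sub>m ?\<Phi> \<psi>'"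
    for t \<psi> \<psi>'
    unfolding blockdiag_scalar_lincomb He_mult_diff_lincomb[OF Rh mult_carrier_mat[OF \<Sigma> Rh] assms(7) \<Psi> \<Psi>]
    using Rh \<Sigma> \<Psi>[of \<psi>] \<Psi>[of \<psi>'] assms(7)
    by (intro sym_block3_affine_middle) (auto simp: He_def)
  have \<Phi>_cong: "?\<Phi> \<psi> = ?\<Phi> \<psi>'" if "\<forall>j<q. \<psi> j = \<psi>' j" for \<psi> \<psi>'
    using that by (simp cong: blockdiag_cong)
  have "(\<forall>\<tau>. (\<forall>j<q. 0 \<le> \<tau> j \<and> \<tau> j \<le> T2 j) \<longrightarrow> neg_def (?\<Phi> (\<lambda>j. exp (\<sigma> j * \<tau> j))))
     \<longleftrightarrow> (\<forall>\<psi>. (\<forall>j<q. \<psi> j \<in> {1, exp (\<sigma> j * T2 j)}) \<longrightarrow> neg_def (?\<Phi> \<psi>))"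
  proof (rule neg_def_exp_box_iff_vertices)
    show "?\<Phi> \<psi> \<in> carrier_mat (n + n + m) (n + n + m)" for \<psi>
      by (simp add: sym_block3_def)
  qed (use \<Phi>_affine \<Phi>_cong assms(9,14) in \<open>auto simp: less_imp_le\<close>)
  then show ?thesis
    unfolding Let_def R\<tau> \<Sigma>_assoc[OF \<Psi>] .
qed

end
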